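(* Let $b>0$ and let $f:(0,b)\to\mathbb{R}$ be real analytic and not identically zero. Let $\mathcal I=\{x\in(0,b):f(x)=0\}$. Assume that: (1) as $x\to b$ we have $\kappa(f,x)\to\infty$, and for every sequence $x_j\in(0,b)$ with $x_j\to0$ and $\mathrm{dist}(x_j,\mathcal I)\to0$ we have $\kappa(f,x_j)\to\infty$; (2) both as $x\to0$ and as $x\to b$ we have $\limsup|H(f,x)|\leq C$ for some constant $C>0$, where $H(f,x)=\frac{x^2f(x)f''(x)}{f(x)^2+x^2f'(x)^2}$. The part of this hypothesis concerning $x\to0$ (resp. $x\to b$) is automatically satisfied if $f$ admits an analytic extension to $(-\epsilon,b)$ (resp. $(0,b+\epsilon)$) for some $\epsilon>0$. Then $f$ is amenable.
   Context: Relative distance on $\mathbb{R}$: $\mathrm{dist}(x,y)=0$ if $x=y=0$, $\mathrm{dist}(x,y)=|\log(y/x)|$ if $xy>0$, and $\mathrm{dist}(x,y)=\infty$ otherwise; for a set $S$, $\mathrm{dist}(x,S)=\inf_{s\in S}\mathrm{dist}(x,s)$. For a real analytic function $f$ on an open set $\Omega\subseteq\mathbb{R}$, not identically zero, the condition number is $\kappa(f,x)=0$ if $x=0$, $\kappa(f,x)=\infty$ if $x\neq0$ and $f(x)=0$, and $\kappa(f,x)=|x|\,|f'(x)|/|f(x)|$ otherwise; set $\mu(f,x)=1+\kappa(f,x)$. The function $f:\Omega\to\mathbb{R}$ is called amenable if there is a constant $C>0$ such that for every $x\in\Omega$ with $\kappa(f,x)<\infty$, the set $B_x=\{y\in\mathbb{R}:\mathrm{dist}(y,x)<1/(C\mu(f,x))\}$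 is contained in $\Omega$, and $\mu(f,y)\leq C\mu(f,x)$ for all $y\in B_x$. *)

theory Defs
  imports "HOL-Analysis.Analysis"
begin

definition real_analytic_on :: "(real \<Rightarrow> real) \<Rightarrow> real set \<Rightarrow> bool" where
  "real_analytic_on f S \<longleftrightarrow>
     (\<forall>x\<in>S. \<exists>r>0. \<exists>a::nat \<Rightarrow> real.
        \<forall>y. \<bar>y - x\<bar> < r \<longrightarrow> (\<lambda>n. a n * (y - x) ^ n) sums f y)"

definition reldist :: "real \<Rightarrow> real \<Rightarrow> ereal" where
  "reldist x y = (if x = 0 \<and> y = 0 then 0
                  else if x * y > 0 then ereal \<bar>ln (y / x)\<bar> else \<infinity>)"

definition reldist_set :: "real \<Rightarrow> real set \<Rightarrow> ereal" where
  "reldist_set x S = (INF s\<in>S. reldist x s)"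

definition kappa :: "(real \<Rightarrow> real) \<Rightarrow> real \<Rightarrow> ereal" where
  "kappa f x = (if x = 0 then 0
                else if f x = 0 then \<infinity>
                else ereal (\<bar>x\<bar> * \<bar>deriv f x\<bar> / \<bar>f x\<bar>))"

definition mu :: "(real \<Rightarrow> real) \<Rightarrow> real \<Rightarrow> ereal" where
  "mu f x = 1 + kappa f x"

definition amenable_on :: "(real \<Rightarrow> real) \<Rightarrow> real set \<Rightarrow> bool" where
  "amenable_on f \<Omega> \<longleftrightarrow>
     (\<exists>C>0. \<forall>x\<in>\<Omega>. kappa f x < \<infinity> \<longrightarrow>
        (let B = {y. reldist y x < ereal (1 / (C * real_of_ereal (mu f x)))} in
           B \<subseteq> \<Omega> \<and> (\<forall>y\<in>B. mu f y \<le> ereal C * mu f x)))"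

definition Hfun :: "(real \<Rightarrow> real) \<Rightarrow> real \<Rightarrow> real" where
  "Hfun f x = x\<^sup>2 * f x * deriv (deriv f) x / ((f x)\<^sup>2 + x\<^sup>2 * (deriv f x)\<^sup>2)"

end

theory Submission
  imports Defs
begin

(* Away from the zeros of f write u = x f'/f, so that kappa = |u|. A direct computation gives the
   Riccati equation x u' = u - u^2 + H (1 + u^2); hence w = 1/sqrt (1 + u^2), which is comparable
   to 1/mu, satisfies |x w'| <= |H| + 2. The limsup hypotheses bound H near the ends of (0,b), and
   analyticity bounds it in the interior: near a zero of order m, f f''/f'^2 tends to (m - 1)/m.
   So on a relative ball of radius about w(x), w stays above w(x)/2, and the Gronwall estimate
   |f'| <= |f|/(x w) keeps f from vanishing there. Going right, the ball cannot reach b because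
   kappa blows up at b while it stays below 4 mu(x) on the ball. *)

section \<open>Local power series expansions\<close>

definition powser_expansion :: "(real \<Rightarrow> real) \<Rightarrow> real \<Rightarrow> real \<Rightarrow> (nat \<Rightarrow> real) \<Rightarrow> bool" where
  "powser_expansion f x r a \<longleftrightarrow> (\<forall>h. \<bar>h\<bar> < r \<longrightarrow> (\<lambda>n. a n * h ^ n) sums f (x + h))"

lemma real_analytic_on_powser_expansion:
  assumes "real_analytic_on f S" "x \<in> S"
  obtains r a where "r > 0" "powser_expansion f x r a"
proof -
  obtain r a where "r > 0" and "\<And>y. \<bar>y - x\<bar> < r \<Longrightarrow> (\<lambda>n. a n * (y - x) ^ n) sums f y"
    using assms unfolding real_analytic_on_def by blast
  then have "powser_expansion f x r a"
    unfolding powser_expansion_def by (metis add_diff_cancel_left' add.commute)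
  with \<open>r > 0\<close> show ?thesis using that by blast
qed

lemma powser_expansion_summable:
  "powser_expansion f x r a \<Longrightarrow> \<bar>h\<bar> < r \<Longrightarrow> summable (\<lambda>n. a n * h ^ n)"
  unfolding powser_expansion_def using sums_summable by blast

lemma powser_expansion_eq:
  "powser_expansion f x r a \<Longrightarrow> \<bar>h\<bar> < r \<Longrightarrow> f (x + h) = (\<Sum>n. a n * h ^ n)"
  unfolding powser_expansion_def using sums_unique by blast

lemma powser_expansion_DERIV:
  assumes f: "powser_expansion f x r a" and h: "\<bar>h\<bar> < r"
  shows "(f has_real_derivative (\<Sum>n. diffs a n * h ^ n)) (at (x + h))"
proof -
  let ?P = "\<lambda>z. \<Sum>n. a n * z ^ n"
  have "(?P has_real_derivative (\<Sum>n. diffs a n * h ^ n)) (at ((x + h) + - x))"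
    using termdiffs_strong'[of r a h] powser_expansion_summable[OF f] h by auto
  then have "((\<lambda>y. ?P (y + - x)) has_real_derivative (\<Sum>n. diffs a n * h ^ n)) (at (x + h))"
    by (simp only: DERIV_shift)
  moreover have "?P (y + - x) = f y" if "y \<in> ball x r" for y
  proof -
    have "\<bar>y - x\<bar> < r" using that by (simp add: dist_real_def abs_minus_commute)
    then show ?thesis using powser_expansion_eq[OF f, of "y - x"] by simp
  qed
  moreover have "x + h \<in> ball x r" using h by (simp add: dist_real_def)
  ultimately show ?thesis
    using has_field_derivative_transform_within_open[OF _ open_ball] by blast
qed

lemma powser_expansion_deriv:
  assumes f: "powser_expansion f x r a"
  shows "powser_expansion (deriv f) x r (diffs a)"
  unfolding powser_expansion_def
proof (intro allI impI)
  fix h assume h: "\<bar>h\<bar> < r"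
  have "summable (\<lambda>n. diffs a n * h ^ n)"
    using termdiff_converges[of h r a] powser_expansion_summable[OF f] h by auto
  then show "(\<lambda>n. diffs a n * h ^ n) sums deriv f (x + h)"
    using DERIV_imp_deriv[OF powser_expansion_DERIV[OF f h]] by (simp add: summable_sums)
qed

lemma real_analytic_on_DERIV:
  assumes "real_analytic_on f S" "y \<in> S"
  shows "(f has_real_derivative deriv f y) (at y)"
    and "(deriv f has_real_derivative deriv (deriv f) y) (at y)"
proof -
  obtain r a where "r > 0" and f: "powser_expansion f y r a"
    using real_analytic_on_powser_expansion[OF assms] .
  have "(f has_real_derivative (\<Sum>n. diffs a n * 0 ^ n)) (at y)"
    using powser_expansion_DERIV[OF f, of 0] \<open>r > 0\<close> by simp
  then show "(f has_real_derivative deriv f y) (at y)"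
    by (simp add: DERIV_imp_deriv)
  have "(deriv f has_real_derivative (\<Sum>n. diffs (diffs a) n * 0 ^ n)) (at y)"
    using powser_expansion_DERIV[OF powser_expansion_deriv[OF f], of 0] \<open>r > 0\<close> by simp
  then show "(deriv f has_real_derivative deriv (deriv f) y) (at y)"
    by (simp add: DERIV_imp_deriv)
qed

lemma powser_factor_power:
  fixes c :: "nat \<Rightarrow> real"
  assumes "\<And>i. i < k \<Longrightarrow> c i = 0" "summable (\<lambda>n. c n * h ^ n)"
  shows "(\<Sum>n. c n * h ^ n) = h ^ k * (\<Sum>n. c (n + k) * h ^ n)"
proof -
  have s: "summable (\<lambda>n. c (n + k) * h ^ n)"
    using assms(2) summable_powser_ignore_initial_segment by blast
  have "(\<lambda>n. c (n + k) * h ^ (n + k)) sums (\<Sum>n. c n * h ^ n)"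
    using sums_zero_iff_shift[of k "\<lambda>n. c n * h ^ n"] assms summable_sums by simp
  then have "(\<Sum>n. c n * h ^ n) = (\<Sum>n. c (n + k) * h ^ (n + k))"
    by (simp add: sums_iff)
  also have "\<dots> = (\<Sum>n. h ^ k * (c (n + k) * h ^ n))"
    by (simp add: power_add mult_ac)
  also have "\<dots> = h ^ k * (\<Sum>n. c (n + k) * h ^ n)"
    using suminf_mult[OF s] by simp
  finally show ?thesis .
qed

lemma isCont_powser_at_0:
  fixes c :: "nat \<Rightarrow> real"
  assumes "r > 0" "\<And>h. \<bar>h\<bar> < r \<Longrightarrow> summable (\<lambda>n. c n * h ^ n)"
  shows "isCont (\<lambda>h. \<Sum>n. c n * h ^ n) 0"
  using isCont_powser[of c "r / 2" 0] assms by simp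

section \<open>Boundedness of H\<close>

lemma isCont_locally_bounded:
  fixes g :: "real \<Rightarrow> real"
  assumes "isCont g x"
  shows "\<exists>d>0. \<forall>y. \<bar>y - x\<bar> < d \<longrightarrow> \<bar>g y\<bar> \<le> \<bar>g x\<bar> + 1"
proof -
  obtain d where "d > 0" and d: "\<And>y. dist y x < d \<Longrightarrow> dist (g y) (g x) < 1"
    using assms unfolding continuous_at_eps_delta by (meson zero_less_one)
  have "\<bar>g y\<bar> \<le> \<bar>g x\<bar> + 1" if "\<bar>y - x\<bar> < d" for y
    using d[of y] that by (simp add: dist_real_def)
  with \<open>d > 0\<close> show ?thesis by blast
qed

lemma Hfun_eq_0: "f y = 0 \<Longrightarrow> Hfun f y = 0"
  by (simp add: Hfun_def)

lemma abs_Hfun_le: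
  assumes "deriv f y \<noteq> 0"
  shows "\<bar>Hfun f y\<bar> \<le> \<bar>f y * deriv (deriv f) y\<bar> / (deriv f y)\<^sup>2"
proof (cases "y = 0")
  case False
  have "\<bar>Hfun f y\<bar> = y\<^sup>2 * \<bar>f y * deriv (deriv f) y\<bar> / ((f y)\<^sup>2 + y\<^sup>2 * (deriv f y)\<^sup>2)"
    by (simp add: Hfun_def abs_mult)
  also have "\<dots> \<le> y\<^sup>2 * \<bar>f y * deriv (deriv f) y\<bar> / (y\<^sup>2 * (deriv f y)\<^sup>2)"
    using assms False by (intro divide_left_mono) (auto intro!: mult_pos_pos add_nonneg_pos)
  also have "\<dots> = \<bar>f y * deriv (deriv f) y\<bar> / (deriv f y)\<^sup>2"
    using False by simp
  finally show ?thesis .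
qed (simp add: Hfun_def)

lemma isCont_Hfun:
  assumes "isCont f x" "isCont (deriv f) x" "isCont (deriv (deriv f)) x" "f x \<noteq> 0"
  shows "isCont (Hfun f) x"
proof -
  have "(f x)\<^sup>2 + x\<^sup>2 * (deriv f x)\<^sup>2 > 0"
    using assms(4) by (intro add_pos_nonneg) auto
  then show ?thesis
    unfolding Hfun_def[abs_def] using assms by (auto intro!: continuous_intros)
qed

lemma powser_expansion_isCont:
  "powser_expansion f x r a \<Longrightarrow> r > 0 \<Longrightarrow> isCont f x"
  using powser_expansion_DERIV[of f x r a 0] DERIV_isCont by force

lemma abs_power_orders_ratio:
  fixes h A B C :: real
  assumes "h \<noteq> 0" "1 \<le> m"
  shows "\<bar>h ^ m * A * (h ^ (m - 2) * C)\<bar> / (h ^ (m - 1) * B)\<^sup>2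
    = \<bar>(if m = 1 then h else 1) * A * C\<bar> / B\<^sup>2"
proof -
  have pow: "h ^ m * h ^ (m - 2) = (if m = 1 then h else 1) * (h ^ (m - 1))\<^sup>2"
  proof (cases "m = 1")
    case False
    with assms(2) have "m = (m - 2) + 2" by simp
    then obtain k where "m = k + 2" by blast
    then show ?thesis by (simp add: power_add power2_eq_square)
  qed simp
  have cancel: "\<bar>(e * Q) * X\<bar> / (Q * G) = \<bar>e * X\<bar> / G" if "Q > 0" for e Q X G :: real
    using that by (simp add: abs_mult)
  have "\<bar>h ^ m * A * (h ^ (m - 2) * C)\<bar> / (h ^ (m - 1) * B)\<^sup>2
      = \<bar>(h ^ m * h ^ (m - 2)) * (A * C)\<bar> / ((h ^ (m - 1))\<^sup>2 * B\<^sup>2)"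
    by (simp add: power_mult_distrib mult_ac)
  also have "\<dots> = \<bar>(if m = 1 then h else 1) * (A * C)\<bar> / B\<^sup>2"
    unfolding pow using \<open>h \<noteq> 0\<close> by (intro cancel) simp
  finally show ?thesis
    by (simp add: mult_ac)
qed

lemma powser_expansion_Hfun_bounded_near_zero:
  assumes f: "powser_expansion f x r a" and "r > 0"
    and m: "a m \<noteq> 0" "1 \<le> m" "\<And>i. i < m \<Longrightarrow> a i = 0"
  shows "\<exists>d>0. \<exists>B. \<forall>y. \<bar>y - x\<bar> < d \<longrightarrow> \<bar>Hfun f y\<bar> \<le> B"
proof -
  let ?P = "\<lambda>c h. \<Sum>n. c n * h ^ n"
  note f1 = powser_expansion_deriv[OF f] and f2 = powser_expansion_deriv[OF powser_expansion_deriv[OF f]]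
  define c0 where "c0 n = a (n + m)" for n
  define c1 where "c1 n = diffs a (n + (m - 1))" for n
  define c2 where "c2 n = diffs (diffs a) (n + (m - 2))" for n
  have fac: "f (x + h) = h ^ m * ?P c0 h" "deriv f (x + h) = h ^ (m - 1) * ?P c1 h"
    "deriv (deriv f) (x + h) = h ^ (m - 2) * ?P c2 h" if "\<bar>h\<bar> < r" for h
    using that m powser_factor_power[of m a h] powser_factor_power[of "m - 1" "diffs a" h]
      powser_factor_power[of "m - 2" "diffs (diffs a)" h]
      powser_expansion_eq[OF f] powser_expansion_eq[OF f1] powser_expansion_eq[OF f2]
      powser_expansion_summable[OF f] powser_expansion_summable[OF f1] powser_expansion_summable[OF f2]
    by (auto simp: c0_def c1_def c2_def diffs_def)
  have cont: "isCont (?P c0) 0" "isCont (?P c1) 0" "isCont (?P c2) 0"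
    using powser_expansion_summable[OF f] powser_expansion_summable[OF f1]
      powser_expansion_summable[OF f2] \<open>r > 0\<close>
    by (auto intro!: isCont_powser_at_0 simp: c0_def c1_def c2_def summable_powser_ignore_initial_segment)
  have c1_0: "?P c1 0 \<noteq> 0"
    using m by (simp add: c1_def diffs_def)
  \<comment> \<open>\<open>f f''/f'\<^sup>2\<close> at \<open>x + h\<close>, once the powers of \<open>h\<close> have cancelled\<close>
  define \<Phi> where "\<Phi> h = (if m = 1 then h else 1) * ?P c0 h * ?P c2 h / (?P c1 h)\<^sup>2" for h
  have Phi_cont: "isCont \<Phi> 0"
    unfolding \<Phi>_def using cont c1_0 by (cases "m = 1") (auto intro!: continuous_intros)
  then obtain d1 where "d1 > 0" and d1: "\<And>h. \<bar>h\<bar> < d1 \<Longrightarrow> \<bar>\<Phi> h\<bar> \<le> \<bar>\<Phi> 0\<bar> + 1"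
    using isCont_locally_bounded[OF Phi_cont] by auto
  obtain d2 where "d2 > 0" and d2: "\<And>h. \<bar>h\<bar> < d2 \<Longrightarrow> ?P c1 h \<noteq> 0"
    using continuous_at_avoid[OF cont(2) c1_0] by (auto simp: dist_real_def)
  have bound: "\<bar>Hfun f (x + h)\<bar> \<le> \<bar>\<Phi> 0\<bar> + 1" if h: "\<bar>h\<bar> < min r (min d1 d2)" for h
  proof (cases "f (x + h) = 0")
    case False
    then have "h \<noteq> 0"
      using fac(1)[of 0] \<open>r > 0\<close> m(2) by auto
    then have "\<bar>Hfun f (x + h)\<bar> \<le> \<bar>h ^ m * ?P c0 h * (h ^ (m - 2) * ?P c2 h)\<bar> / (h ^ (m - 1) * ?P c1 h)\<^sup>2"
      using abs_Hfun_le[of f "x + h"] fac h d2[of h] by auto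
    also have "\<dots> = \<bar>\<Phi> h\<bar>"
      using abs_power_orders_ratio[OF \<open>h \<noteq> 0\<close> m(2)] by (simp add: \<Phi>_def)
    finally show ?thesis using d1[of h] h by simp
  qed (simp add: Hfun_eq_0)
  have "\<forall>y. \<bar>y - x\<bar> < min r (min d1 d2) \<longrightarrow> \<bar>Hfun f y\<bar> \<le> \<bar>\<Phi> 0\<bar> + 1"
    using bound[of "_ - x"] by simp
  moreover have "min r (min d1 d2) > 0"
    using \<open>r > 0\<close> \<open>d1 > 0\<close> \<open>d2 > 0\<close> by simp
  ultimately show ?thesis by blast
qed

lemma real_analytic_on_Hfun_locally_bounded:
  assumes "real_analytic_on f S" "x \<in> S"
  shows "\<exists>d>0. \<exists>B. \<forall>y. \<bar>y - x\<bar> < d \<longrightarrow> \<bar>Hfun f y\<bar> \<le> B"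
proof -
  obtain r a where "r > 0" and f: "powser_expansion f x r a"
    using real_analytic_on_powser_expansion[OF assms] .
  show ?thesis
  proof (cases "\<exists>n. a n \<noteq> 0")
    case False
    then have "f y = 0" if "\<bar>y - x\<bar> < r" for y
      using powser_expansion_eq[OF f, of "y - x"] that by simp
    then show ?thesis
      using \<open>r > 0\<close> Hfun_eq_0 by (metis abs_zero order_refl)
  next
    case True
    define m where "m = (LEAST n. a n \<noteq> 0)"
    have m: "a m \<noteq> 0" "\<And>i. i < m \<Longrightarrow> a i = 0"
      using LeastI_ex[OF True] not_less_Least unfolding m_def by auto
    show ?thesis
    proof (cases "m = 0")
      case True
      have "f x \<noteq> 0"
        using powser_expansion_eq[OF f, of 0] \<open>r > 0\<close> m(1) True by simp
      moreover note f1 = powser_expansion_deriv[OF f]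
      note f2 = powser_expansion_deriv[OF f1]
      ultimately have "isCont (Hfun f) x"
        using \<open>r > 0\<close> by (intro isCont_Hfun powser_expansion_isCont[OF f] 
            powser_expansion_isCont[OF f1] powser_expansion_isCont[OF f2])
      then show ?thesis
        using isCont_locally_bounded by blast
    next
      case False
      then show ?thesis
        using powser_expansion_Hfun_bounded_near_zero[OF f \<open>r > 0\<close> m(1)] m(2) by simp
    qed
  qed
qed

lemma bounded_image_compact_if_locally_bounded:
  fixes g :: "real \<Rightarrow> real"
  assumes "compact K" and local: "\<And>x. x \<in> K \<Longrightarrow> \<exists>d>0. \<exists>B. \<forall>y. \<bar>y - x\<bar> < d \<longrightarrow> \<bar>g y\<bar> \<le> B"
  shows "bounded (g ` K)"
proof -
  obtain d B where d: "\<And>x. x \<in> K \<Longrightarrow> d x > 0 \<and> (\<forall>y. \<bar>y - x\<bar> < d x \<longrightarrow> \<bar>g y\<bar> \<le> B x)"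
    using local by metis
  obtain L where "L \<subseteq> K" "finite L" and cover: "K \<subseteq> (\<Union>x\<in>L. ball x (d x))"
    using compactE_image[OF \<open>compact K\<close>, of K "\<lambda>x. ball x (d x)"] d by force
  have "bounded (g ` ball x (d x))" if "x \<in> L" for x
  proof -
    have "\<bar>g y\<bar> \<le> B x" if "y \<in> ball x (d x)" for y
      using d[of x] \<open>x \<in> L\<close> \<open>L \<subseteq> K\<close> that by (auto simp: dist_real_def abs_minus_commute)
    then show ?thesis
      unfolding bounded_real by blast
  qed
  then have "bounded (\<Union>x\<in>L. g ` ball x (d x))"
    using \<open>finite L\<close> by blast
  moreover have "g ` K \<subseteq> (\<Union>x\<in>L. g ` ball x (d x))"
    using cover by blast
  ultimately show ?thesis
    by (rule bounded_subset)
qed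

lemma bounded_on_Ioo_if_locally_bounded:
  fixes g :: "real \<Rightarrow> real"
  assumes local: "\<And>x. x \<in> {a<..<b} \<Longrightarrow> \<exists>d>0. \<exists>B. \<forall>y. \<bar>y - x\<bar> < d \<longrightarrow> \<bar>g y\<bar> \<le> B"
    and left: "Limsup (at_right a) (\<lambda>y. ereal \<bar>g y\<bar>) < \<infinity>"
    and right: "Limsup (at_left b) (\<lambda>y. ereal \<bar>g y\<bar>) < \<infinity>"
  shows "bounded (g ` {a<..<b})"
proof -
  have finite_bound: "\<exists>C. eventually (\<lambda>y. \<bar>g y\<bar> < C) F"
    if "Limsup F (\<lambda>y. ereal \<bar>g y\<bar>) < \<infinity>" for F
  proof -
    let ?L = "Limsup F (\<lambda>y. ereal \<bar>g y\<bar>)"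
    have "?L < ereal (real_of_ereal ?L + 1)"
      using that by (cases ?L) auto
    then show ?thesis
      using Limsup_lessD by fastforce
  qed
  obtain C1 p where "p > a" and p: "\<And>y. a < y \<Longrightarrow> y < p \<Longrightarrow> \<bar>g y\<bar> < C1"
    using finite_bound[OF left] unfolding eventually_at_right_field by blast
  obtain C2 q where "q < b" and q: "\<And>y. q < y \<Longrightarrow> y < b \<Longrightarrow> \<bar>g y\<bar> < C2"
    using finite_bound[OF right] unfolding eventually_at_left_field by blast
  have "bounded (g ` {a<..<p})" "bounded (g ` {q<..<b})"
    unfolding bounded_real using p q by (auto intro!: exI less_imp_le)
  moreover have "bounded (g ` {p..q})"
    using local \<open>p > a\<close> \<open>q < b\<close> by (intro bounded_image_compact_if_locally_bounded) auto
  moreover have "{a<..<b} \<subseteq> {a<..<p} \<union> {p..q} \<union> {q<..<b}"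
    by auto
  ultimately show ?thesis
    by (metis bounded_Un bounded_subset image_Un image_mono)
qed

section \<open>Propagation of non-vanishing\<close>

lemma Gronwall_nonzero:
  fixes F F' :: "real \<Rightarrow> real"
  assumes "a \<le> z" "continuous_on {a..z} F" "F a \<noteq> 0"
    and F': "\<And>t. a < t \<Longrightarrow> t < z \<Longrightarrow> (F has_real_derivative F' t) (at t)"
    and bound: "\<And>t. a < t \<Longrightarrow> t < z \<Longrightarrow> \<bar>F' t\<bar> \<le> L * \<bar>F t\<bar>"
  shows "F z \<noteq> 0"
proof -
  define G where "G t = (F t)\<^sup>2 * exp (2 * L * t)" for t
  have "G a \<le> G z"
  proof (rule DERIV_nonneg_imp_increasing_open[OF \<open>a \<le> z\<close>])
    fix t assume t: "a < t" "t < z"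
    have "- (F t * F' t) \<le> \<bar>F t\<bar> * \<bar>F' t\<bar>"
      by (metis abs_ge_minus_self abs_mult)
    also have "\<dots> \<le> \<bar>F t\<bar> * (L * \<bar>F t\<bar>)"
      using bound[OF t] by (rule mult_left_mono) simp
    also have "\<dots> = L * (F t)\<^sup>2"
      by (simp add: power2_eq_square abs_mult_self_eq mult_ac)
    finally have "- (F t * F' t) \<le> L * (F t)\<^sup>2" .
    moreover have "(G has_real_derivative 2 * exp (2 * L * t) * (F t * F' t + L * (F t)\<^sup>2)) (at t)"
      unfolding G_def[abs_def] using F'[OF t]
      by (auto intro!: derivative_eq_intros simp: algebra_simps power2_eq_square)
    ultimately show "\<exists>y. (G has_real_derivative y) (at t) \<and> 0 \<le> y"
      by (intro exI conjI) auto
  next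
    show "continuous_on {a..z} G"
      unfolding G_def[abs_def] using assms(2) by (intro continuous_intros)
  qed
  moreover have "0 < G a"
    using \<open>F a \<noteq> 0\<close> by (simp add: G_def)
  ultimately show ?thesis
    by (auto simp: G_def)
qed

lemma lower_bound_from_derivative_bound:
  fixes Q Q' :: "real \<Rightarrow> real"
  assumes "a \<le> t" and Q': "\<And>\<tau>. \<tau> \<in> {a..t} \<Longrightarrow> (Q has_real_derivative Q' \<tau>) (at \<tau>)"
    and bound: "\<And>\<tau>. \<tau> \<in> {a..t} \<Longrightarrow> \<bar>Q' \<tau>\<bar> \<le> D"
  shows "Q a - D * (t - a) \<le> Q t"
proof -
  have "Q a + D * a \<le> Q t + D * t"
  proof (rule DERIV_nonneg_imp_increasing_open[where f = "\<lambda>\<tau>. Q \<tau> + D * \<tau>", OF \<open>a \<le> t\<close>])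
    fix \<tau> assume "a < \<tau>" "\<tau> < t"
    then show "\<exists>y. ((\<lambda>\<tau>. Q \<tau> + D * \<tau>) has_real_derivative y) (at \<tau>) \<and> 0 \<le> y"
      using Q'[of \<tau>] bound[of \<tau>] by (intro exI[of _ "Q' \<tau> + D"]) (auto intro!: derivative_eq_intros)
  next
    show "continuous_on {a..t} (\<lambda>\<tau>. Q \<tau> + D * \<tau>)"
      by (intro continuous_at_imp_continuous_on ballI continuous_intros DERIV_isCont[OF Q'])
  qed
  then show ?thesis
    by (simp add: algebra_simps)
qed

lemma continuous_on_first_zero:
  fixes F :: "real \<Rightarrow> real"
  assumes "continuous_on {a..s} F" "t \<in> {a..s}" "F t = 0"
  obtains z where "z \<in> {a..s}" "F z = 0" "\<And>\<tau>. a \<le> \<tau> \<Longrightarrow> \<tau> < z \<Longrightarrow> F \<tau> \<noteq> 0"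
proof -
  define Z where "Z = {\<tau> \<in> {a..s}. F \<tau> = 0}"
  have "compact ({a..s} \<inter> Z)"
    unfolding Z_def using continuous_closed_preimage_constant[OF assms(1)] by auto
  moreover have "{a..s} \<inter> Z = Z" "Z \<noteq> {}"
    using assms(2,3) by (auto simp: Z_def)
  ultimately obtain z where "z \<in> Z" "\<And>\<tau>. \<tau> \<in> Z \<Longrightarrow> z \<le> \<tau>"
    using compact_attains_inf by metis
  then show ?thesis
    using that by (force simp: Z_def)
qed

lemma nonzero_propagates_right:
  fixes F F' Q Q' :: "real \<Rightarrow> real"
  assumes "a \<le> s" and F_cont: "continuous_on {a..s} F" and "F a \<noteq> 0" "Q a > 0"
    and F': "\<And>t. t \<in> {a..s} \<Longrightarrow> F t \<noteq> 0 \<Longrightarrow> (F has_real_derivative F' t) (at t)"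
    and Q': "\<And>t. t \<in> {a..s} \<Longrightarrow> F t \<noteq> 0 \<Longrightarrow> (Q has_real_derivative Q' t) (at t)"
    and Q'_bound: "\<And>t. t \<in> {a..s} \<Longrightarrow> F t \<noteq> 0 \<Longrightarrow> \<bar>Q' t\<bar> \<le> D"
    and F'_bound: "\<And>t. t \<in> {a..s} \<Longrightarrow> F t \<noteq> 0 \<Longrightarrow> \<bar>F' t\<bar> * Q t \<le> E * \<bar>F t\<bar>"
    and small: "D * (s - a) \<le> Q a / 2"
  shows "F s \<noteq> 0 \<and> Q a / 2 \<le> Q s"
proof -
  have "0 \<le> D"
    using Q'_bound[of a] \<open>a \<le> s\<close> \<open>F a \<noteq> 0\<close> by auto
  have Q_half: "Q a / 2 \<le> Q t" if t: "t \<in> {a..s}" and nz: "\<And>\<tau>. \<tau> \<in> {a..t} \<Longrightarrow> F \<tau> \<noteq> 0" for t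
  proof -
    have "Q a - D * (t - a) \<le> Q t"
      using t nz by (intro lower_bound_from_derivative_bound[where Q' = Q'] Q' Q'_bound) auto
    moreover have "D * (t - a) \<le> D * (s - a)"
      using t \<open>0 \<le> D\<close> by (intro mult_left_mono) auto
    ultimately show ?thesis
      using small by linarith
  qed
  have nonzero: "F t \<noteq> 0" if t: "t \<in> {a..s}" for t
  proof
    assume "F t = 0"
    then obtain z where z: "z \<in> {a..s}" "F z = 0"
      and before_z: "\<And>\<tau>. a \<le> \<tau> \<Longrightarrow> \<tau> < z \<Longrightarrow> F \<tau> \<noteq> 0"
      using continuous_on_first_zero[OF F_cont t] by blast
    have "F z \<noteq> 0"
    proof (rule Gronwall_nonzero[where F = F and F' = F' and L = "2 * E / Q a"])
      show "a \<le> z" "continuous_on {a..z} F"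
        using z F_cont by (auto elim: continuous_on_subset)
      fix \<tau> assume \<tau>: "a < \<tau>" "\<tau> < z"
      then have "\<tau> \<in> {a..s}" "F \<tau> \<noteq> 0"
        using z before_z by auto
      then show "(F has_real_derivative F' \<tau>) (at \<tau>)"
        by (rule F')
      have "Q a / 2 \<le> Q \<tau>"
        using \<tau> z before_z by (intro Q_half) auto
      then have "\<bar>F' \<tau>\<bar> * (Q a / 2) \<le> \<bar>F' \<tau>\<bar> * Q \<tau>"
        by (rule mult_left_mono) simp
      also have "\<dots> \<le> E * \<bar>F \<tau>\<bar>"
        by (rule F'_bound) fact+
      finally show "\<bar>F' \<tau>\<bar> \<le> 2 * E / Q a * \<bar>F \<tau>\<bar>"
        using \<open>Q a > 0\<close> by (simp add: field_simps)
    qed fact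
    with z show False
      by simp
  qed
  show ?thesis
    using nonzero Q_half[of s] \<open>a \<le> s\<close> by auto
qed

lemma nonzero_propagates_left:
  fixes F F' Q Q' :: "real \<Rightarrow> real"
  assumes "s \<le> a" and F_cont: "continuous_on {s..a} F" and "F a \<noteq> 0" "Q a > 0"
    and F': "\<And>t. t \<in> {s..a} \<Longrightarrow> F t \<noteq> 0 \<Longrightarrow> (F has_real_derivative F' t) (at t)"
    and Q': "\<And>t. t \<in> {s..a} \<Longrightarrow> F t \<noteq> 0 \<Longrightarrow> (Q has_real_derivative Q' t) (at t)"
    and Q'_bound: "\<And>t. t \<in> {s..a} \<Longrightarrow> F t \<noteq> 0 \<Longrightarrow> \<bar>Q' t\<bar> \<le> D"
    and F'_bound: "\<And>t. t \<in> {s..a} \<Longrightarrow> F t \<noteq> 0 \<Longrightarrow> \<bar>F' t\<bar> * Q t \<le> E * \<bar>F t\<bar>"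
    and small: "D * (a - s) \<le> Q a / 2"
  shows "F s \<noteq> 0 \<and> Q a / 2 \<le> Q s"
proof -
  have "F (- (- s)) \<noteq> 0 \<and> Q (- (- a)) / 2 \<le> Q (- (- s))"
  proof (rule nonzero_propagates_right[where F = "\<lambda>t. F (- t)" and Q = "\<lambda>t. Q (- t)"
        and F' = "\<lambda>t. - F' (- t)" and Q' = "\<lambda>t. - Q' (- t)" and a = "- a" and s = "- s"])
    show "continuous_on {- a..- s} (\<lambda>t. F (- t))"
      by (rule continuous_on_compose2[OF F_cont]) (auto intro!: continuous_intros)
    fix t assume "t \<in> {-a..-s}" "F (- t) \<noteq> 0"
    then have t: "- t \<in> {s..a}" "F (- t) \<noteq> 0"
      by auto
    show "((\<lambda>t. F (- t)) has_real_derivative - F' (- t)) (at t)"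
      using F'[OF t] DERIV_mirror[of F "F' (- t)" t] by simp
    show "((\<lambda>t. Q (- t)) has_real_derivative - Q' (- t)) (at t)"
      using Q'[OF t] DERIV_mirror[of Q "Q' (- t)" t] by simp
    show "\<bar>- Q' (- t)\<bar> \<le> D" "\<bar>- F' (- t)\<bar> * Q (- t) \<le> E * \<bar>F (- t)\<bar>"
      using Q'_bound[OF t] F'_bound[OF t] by simp_all
  qed (use assms in auto)
  then show ?thesis by simp
qed

section \<open>The elasticity and its Riccati equation\<close>

definition elasticity :: "(real \<Rightarrow> real) \<Rightarrow> real \<Rightarrow> real" where
  "elasticity f x = x * deriv f x / f x"

definition elasticity_weight :: "(real \<Rightarrow> real) \<Rightarrow> real \<Rightarrow> real" where
  "elasticity_weight f x = 1 / sqrt (1 + (elasticity f x)\<^sup>2)"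

lemma kappa_eq_elasticity: "x \<noteq> 0 \<Longrightarrow> f x \<noteq> 0 \<Longrightarrow> kappa f x = ereal \<bar>elasticity f x\<bar>"
  by (simp add: kappa_def elasticity_def abs_mult)

lemma mu_eq_elasticity: "x \<noteq> 0 \<Longrightarrow> f x \<noteq> 0 \<Longrightarrow> mu f x = ereal (1 + \<bar>elasticity f x\<bar>)"
  by (simp add: mu_def kappa_eq_elasticity)

lemma elasticity_weight_pos: "0 < elasticity_weight f x"
  by (simp add: elasticity_weight_def add_pos_nonneg)

lemma elasticity_weight_bounds:
  shows "\<bar>elasticity f x\<bar> * elasticity_weight f x \<le> 1"
    and "1 \<le> (1 + \<bar>elasticity f x\<bar>) * elasticity_weight f x"
    and "(1 + \<bar>elasticity f x\<bar>) * elasticity_weight f x \<le> 2"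
proof -
  define u where "u = elasticity f x"
  define s where "s = sqrt (1 + u\<^sup>2)"
  have "s > 0" "1 \<le> s"
    by (simp_all add: s_def add_pos_nonneg)
  have "\<bar>u\<bar> \<le> s"
    unfolding s_def by (metis real_sqrt_abs real_sqrt_le_mono le_add_same_cancel2 zero_le_one)
  moreover have "s \<le> 1 + \<bar>u\<bar>"
    unfolding s_def by (rule real_le_lsqrt) (auto simp: power2_eq_square algebra_simps)
  ultimately have "\<bar>u\<bar> / s \<le> 1" "1 \<le> (1 + \<bar>u\<bar>) / s" "(1 + \<bar>u\<bar>) / s \<le> 2"
    using \<open>s > 0\<close> \<open>1 \<le> s\<close> by (simp_all add: field_simps)
  moreover have "elasticity_weight f x = 1 / s"
    by (simp add: elasticity_weight_def u_def s_def)
  ultimately show "\<bar>elasticity f x\<bar> * elasticity_weight f x \<le> 1"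
    and "1 \<le> (1 + \<bar>elasticity f x\<bar>) * elasticity_weight f x"
    and "(1 + \<bar>elasticity f x\<bar>) * elasticity_weight f x \<le> 2"
    by (simp_all add: u_def)
qed

lemma elasticity_le_of_elasticity_weight_half:
  assumes "elasticity_weight f x / 2 \<le> elasticity_weight f y"
  shows "1 + \<bar>elasticity f y\<bar> \<le> 4 * (1 + \<bar>elasticity f x\<bar>)"
proof -
  have "1 + \<bar>elasticity f y\<bar> \<le> 2 / elasticity_weight f y"
    using elasticity_weight_bounds(3)[of f y] elasticity_weight_pos[of f y] by (simp add: field_simps)
  also have "\<dots> \<le> 4 / elasticity_weight f x"
    using assms elasticity_weight_pos[of f x] elasticity_weight_pos[of f y] by (simp add: field_simps)
  also have "\<dots> \<le> 4 * (1 + \<bar>elasticity f x\<bar>)"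
    using elasticity_weight_bounds(2)[of f x] elasticity_weight_pos[of f x] by (simp add: field_simps)
  finally show ?thesis .
qed

lemma abs_deriv_mult_elasticity_weight_le:
  assumes "0 < x" "f x \<noteq> 0"
  shows "\<bar>deriv f x\<bar> * elasticity_weight f x \<le> \<bar>f x\<bar> / x"
proof -
  have "x * \<bar>deriv f x\<bar> / \<bar>f x\<bar> * elasticity_weight f x \<le> 1"
    using elasticity_weight_bounds(1)[of f x] assms by (simp add: elasticity_def abs_mult)
  then show ?thesis
    using assms by (simp add: field_simps)
qed

lemma elasticity_Riccati:
  assumes f': "(f has_real_derivative deriv f t) (at t)"
    and f'': "(deriv f has_real_derivative deriv (deriv f) t) (at t)" and "f t \<noteq> 0"
  shows "\<exists>u'. (elasticity f has_real_derivative u') (at t) \<and>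
    t * u' = elasticity f t - (elasticity f t)\<^sup>2 + Hfun f t * (1 + (elasticity f t)\<^sup>2)"
proof (intro exI conjI)
  show "(elasticity f has_real_derivative
      (deriv f t + t * deriv (deriv f) t) / f t - t * (deriv f t)\<^sup>2 / (f t)\<^sup>2) (at t)"
    unfolding elasticity_def[abs_def] using f' f'' \<open>f t \<noteq> 0\<close>
    by (auto intro!: derivative_eq_intros simp: field_simps power2_eq_square)
  define D where "D = (f t)\<^sup>2 + t\<^sup>2 * (deriv f t)\<^sup>2"
  have "D \<noteq> 0"
    using \<open>f t \<noteq> 0\<close> by (simp add: D_def add_pos_nonneg order.strict_implies_not_eq[symmetric])
  have "1 + (elasticity f t)\<^sup>2 = D / (f t)\<^sup>2"
    using \<open>f t \<noteq> 0\<close> by (simp add: D_def elasticity_def field_simps)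
  moreover have "Hfun f t = t\<^sup>2 * f t * deriv (deriv f) t / D"
    by (simp add: Hfun_def D_def)
  ultimately have H: "Hfun f t * (1 + (elasticity f t)\<^sup>2) = t\<^sup>2 * deriv (deriv f) t / f t"
    using \<open>D \<noteq> 0\<close> \<open>f t \<noteq> 0\<close> by (simp add: power2_eq_square)
  show "t * ((deriv f t + t * deriv (deriv f) t) / f t - t * (deriv f t)\<^sup>2 / (f t)\<^sup>2)
      = elasticity f t - (elasticity f t)\<^sup>2 + Hfun f t * (1 + (elasticity f t)\<^sup>2)"
    unfolding H using \<open>f t \<noteq> 0\<close> by (simp add: elasticity_def field_simps power2_eq_square)
qed

lemma inverse_sqrt_one_plus_square_derivative_bound:
  fixes u :: "real \<Rightarrow> real"
  assumes u': "(u has_real_derivative u') (at t)" and bound: "\<bar>t * u'\<bar> \<le> K * (1 + (u t)\<^sup>2)"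
  shows "\<exists>w'. ((\<lambda>x. 1 / sqrt (1 + (u x)\<^sup>2)) has_real_derivative w') (at t) \<and> \<bar>t * w'\<bar> \<le> K"
proof (intro exI conjI)
  define s where "s = sqrt (1 + (u t)\<^sup>2)"
  have s: "s > 0" "s\<^sup>2 = 1 + (u t)\<^sup>2" "\<bar>u t\<bar> \<le> s"
    unfolding s_def by (auto simp: add_pos_nonneg real_sqrt_abs[symmetric] simp del: real_sqrt_abs
        intro: real_sqrt_le_mono)
  show "((\<lambda>x. 1 / sqrt (1 + (u x)\<^sup>2)) has_real_derivative - u t * u' / s ^ 3) (at t)"
    using u' s(1) unfolding s_def
    by (auto intro!: derivative_eq_intros simp: field_simps power2_eq_square power3_eq_cube)
  have "\<bar>u t\<bar> * \<bar>t * u'\<bar> \<le> s * (K * s\<^sup>2)"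
    using s bound by (intro mult_mono) auto
  then show "\<bar>t * (- u t * u' / s ^ 3)\<bar> \<le> K"
    using s(1) by (simp add: abs_mult field_simps power2_eq_square power3_eq_cube)
qed

lemma elasticity_weight_derivative_bound:
  assumes "(f has_real_derivative deriv f t) (at t)"
    and "(deriv f has_real_derivative deriv (deriv f) t) (at t)" and "f t \<noteq> 0"
  shows "\<exists>w'. (elasticity_weight f has_real_derivative w') (at t) \<and> \<bar>t * w'\<bar> \<le> \<bar>Hfun f t\<bar> + 2"
proof -
  obtain u' where u': "(elasticity f has_real_derivative u') (at t)"
    and Riccati: "t * u' = elasticity f t - (elasticity f t)\<^sup>2 + Hfun f t * (1 + (elasticity f t)\<^sup>2)"
    using elasticity_Riccati[OF assms] by blast
  have "0 \<le> (\<bar>elasticity f t\<bar> - 1)\<^sup>2"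
    by simp
  then have "\<bar>elasticity f t\<bar> \<le> 1 + (elasticity f t)\<^sup>2"
    by (simp add: power2_eq_square algebra_simps)
  then have "\<bar>t * u'\<bar> \<le> (\<bar>Hfun f t\<bar> + 2) * (1 + (elasticity f t)\<^sup>2)"
    unfolding Riccati by (auto simp: abs_mult algebra_simps intro!: order.trans[OF abs_triangle_ineq4]
        order.trans[OF abs_triangle_ineq])
  from inverse_sqrt_one_plus_square_derivative_bound[OF u' this]
  show ?thesis
    unfolding elasticity_weight_def[abs_def] .
qed

section \<open>Amenability from a bound on H\<close>

lemma reldist_less_imp_abs_diff_le:
  assumes "reldist y x < ereal \<delta>" "0 < x" "\<delta> \<le> 1 / 2"
  shows "0 < y" "\<bar>y - x\<bar> \<le> 2 * \<delta> * min x y"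
proof -
  show "0 < y"
    using assms(1,2) by (auto simp: reldist_def zero_less_mult_iff split: if_splits)
  then have ln_close: "\<bar>ln x - ln y\<bar> < \<delta>"
    using assms(1,2) by (auto simp: reldist_def ln_div split: if_splits)
  have "max x y = exp (ln (max x y))"
    using \<open>0 < y\<close> \<open>0 < x\<close> by simp
  also have "\<dots> \<le> exp (ln (min x y) + \<delta>)"
    using ln_close by (auto simp: max_def min_def)
  also have "\<dots> \<le> min x y * (1 + 2 * \<delta>)"
    using \<open>0 < y\<close> \<open>0 < x\<close> ln_close assms(3)
    by (auto simp: exp_add intro!: mult_left_mono real_exp_bound_lemma)
  finally show "\<bar>y - x\<bar> \<le> 2 * \<delta> * min x y"
    by (auto simp: max_def min_def algebra_simps)
qed

locale bounded_Hfun =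
  fixes f :: "real \<Rightarrow> real" and b M :: real
  assumes DERIV_f: "\<And>y. y \<in> {0<..<b} \<Longrightarrow> (f has_real_derivative deriv f y) (at y)"
    and DERIV_deriv_f: "\<And>y. y \<in> {0<..<b} \<Longrightarrow> (deriv f has_real_derivative deriv (deriv f) y) (at y)"
    and Hfun_bound: "\<And>y. y \<in> {0<..<b} \<Longrightarrow> \<bar>Hfun f y\<bar> \<le> M"
    and M_nonneg: "0 \<le> M"
begin

lemma continuous_on_f: "{p..s} \<subseteq> {0<..<b} \<Longrightarrow> continuous_on {p..s} f"
  by (intro continuous_at_imp_continuous_on ballI DERIV_isCont[OF DERIV_f]) auto

lemma elasticity_weight_DERIV:
  assumes "t \<in> {0<..<b}" "f t \<noteq> 0"
  shows "(elasticity_weight f has_real_derivative deriv (elasticity_weight f) t) (at t)"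
    and "t * \<bar>deriv (elasticity_weight f) t\<bar> \<le> M + 2"
proof -
  obtain w' where w': "(elasticity_weight f has_real_derivative w') (at t)"
    and "\<bar>t * w'\<bar> \<le> \<bar>Hfun f t\<bar> + 2"
    using elasticity_weight_derivative_bound[OF DERIV_f DERIV_deriv_f] assms by blast
  moreover have "deriv (elasticity_weight f) t = w'"
    using w' by (rule DERIV_imp_deriv)
  ultimately show "(elasticity_weight f has_real_derivative deriv (elasticity_weight f) t) (at t)"
    and "t * \<bar>deriv (elasticity_weight f) t\<bar> \<le> M + 2"
    using Hfun_bound[OF assms(1)] assms(1) by (auto simp: abs_mult)
qed

lemma propagation_bounds:
  assumes "0 < lo" "lo \<le> t" "t \<in> {0<..<b}" "f t \<noteq> 0"
  shows "\<bar>deriv (elasticity_weight f) t\<bar> \<le> (M + 2) / lo"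
    and "\<bar>deriv f t\<bar> * elasticity_weight f t \<le> 1 / lo * \<bar>f t\<bar>"
proof -
  have "lo * \<bar>deriv (elasticity_weight f) t\<bar> \<le> t * \<bar>deriv (elasticity_weight f) t\<bar>"
    using assms(2) by (intro mult_right_mono) auto
  then show "\<bar>deriv (elasticity_weight f) t\<bar> \<le> (M + 2) / lo"
    using elasticity_weight_DERIV(2)[OF assms(3,4)] assms(1) by (simp add: field_simps)
  have "\<bar>f t\<bar> / t \<le> \<bar>f t\<bar> / lo"
    using assms by (intro divide_left_mono) auto
  then show "\<bar>deriv f t\<bar> * elasticity_weight f t \<le> 1 / lo * \<bar>f t\<bar>"
    using abs_deriv_mult_elasticity_weight_le[of t f] assms by simp
qed

lemma nonzero_propagates_up:
  assumes "x \<in> {0<..<b}" "f x \<noteq> 0" "x \<le> s" "s < b"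
    and "(M + 2) / x * (s - x) \<le> elasticity_weight f x / 2"
  shows "f s \<noteq> 0 \<and> elasticity_weight f x / 2 \<le> elasticity_weight f s"
proof (rule nonzero_propagates_right[where F = f and Q = "elasticity_weight f" and a = x and s = s
      and F' = "deriv f" and Q' = "deriv (elasticity_weight f)"
      and D = "(M + 2) / x" and E = "1 / x"])
  have sub: "{x..s} \<subseteq> {0<..<b}"
    using assms by auto
  then show "continuous_on {x..s} f"
    by (rule continuous_on_f)
  fix t assume "t \<in> {x..s}" "f t \<noteq> 0"
  with sub assms(1) show "(f has_real_derivative deriv f t) (at t)"
    "(elasticity_weight f has_real_derivative deriv (elasticity_weight f) t) (at t)"
    "\<bar>deriv (elasticity_weight f) t\<bar> \<le> (M + 2) / x"
    "\<bar>deriv f t\<bar> * elasticity_weight f t \<le> 1 / x * \<bar>f t\<bar>"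
    using DERIV_f elasticity_weight_DERIV(1) propagation_bounds[of x t] by auto
qed (use assms elasticity_weight_pos in auto)

lemma nonzero_propagates_down:
  assumes "x \<in> {0<..<b}" "f x \<noteq> 0" "0 < s" "s \<le> x"
    and "(M + 2) / s * (x - s) \<le> elasticity_weight f x / 2"
  shows "f s \<noteq> 0 \<and> elasticity_weight f x / 2 \<le> elasticity_weight f s"
proof (rule nonzero_propagates_left[where F = f and Q = "elasticity_weight f" and a = x and s = s
      and F' = "deriv f" and Q' = "deriv (elasticity_weight f)"
      and D = "(M + 2) / s" and E = "1 / s"])
  have sub: "{s..x} \<subseteq> {0<..<b}"
    using assms by auto
  then show "continuous_on {s..x} f"
    by (rule continuous_on_f)
  fix t assume "t \<in> {s..x}" "f t \<noteq> 0"
  with sub assms(3) show "(f has_real_derivative deriv f t) (at t)"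
    "(elasticity_weight f has_real_derivative deriv (elasticity_weight f) t) (at t)"
    "\<bar>deriv (elasticity_weight f) t\<bar> \<le> (M + 2) / s"
    "\<bar>deriv f t\<bar> * elasticity_weight f t \<le> 1 / s * \<bar>f t\<bar>"
    using DERIV_f elasticity_weight_DERIV(1) propagation_bounds[of s t] by auto
qed (use assms elasticity_weight_pos in auto)

lemma less_right_end:
  assumes kappa_b: "(kappa f \<longlongrightarrow> \<infinity>) (at_left b)"
    and x: "x \<in> {0<..<b}" "f x \<noteq> 0" and "x \<le> y"
    and small: "(M + 2) / x * (y - x) \<le> elasticity_weight f x / 2"
  shows "y < b"
proof (rule ccontr)
  assume "\<not> y < b"
  have "eventually (\<lambda>s. ereal (4 * (1 + \<bar>elasticity f x\<bar>)) < kappa f s) (at_left b)"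
    using order_tendstoD(1)[OF kappa_b] by simp
  moreover have "eventually (\<lambda>s. s \<in> {x<..<b}) (at_left b)"
    using x by (intro eventually_at_left_real) simp
  ultimately have "eventually (\<lambda>s. ereal (4 * (1 + \<bar>elasticity f x\<bar>)) < kappa f s \<and> s \<in> {x<..<b})
      (at_left b)"
    by (rule eventually_conj)
  then obtain s where s: "ereal (4 * (1 + \<bar>elasticity f x\<bar>)) < kappa f s" "x < s" "s < b"
    using eventually_happens'[of "at_left b"] by auto
  have "(M + 2) / x * (s - x) \<le> (M + 2) / x * (y - x)"
    using s \<open>\<not> y < b\<close> x M_nonneg by (intro mult_left_mono) auto
  then have "(M + 2) / x * (s - x) \<le> elasticity_weight f x / 2"
    using small by linarith
  then have "f s \<noteq> 0" and "elasticity_weight f x / 2 \<le> elasticity_weight f s"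
    using nonzero_propagates_up[OF x, of s] s by auto
  then have "kappa f s \<le> ereal (4 * (1 + \<bar>elasticity f x\<bar>))"
    using elasticity_le_of_elasticity_weight_half[of f x s] kappa_eq_elasticity[of s f] s x by simp
  with s show False
    by simp
qed

lemma reldist_ball_nonzero:
  assumes kappa_b: "(kappa f \<longlongrightarrow> \<infinity>) (at_left b)" and x: "x \<in> {0<..<b}" "f x \<noteq> 0"
    and y: "reldist y x < ereal (1 / (4 * (M + 2) * (1 + \<bar>elasticity f x\<bar>)))"
  shows "y \<in> {0<..<b} \<and> f y \<noteq> 0 \<and> elasticity_weight f x / 2 \<le> elasticity_weight f y"
proof -
  define K where "K = M + 2"
  define v where "v = 1 + \<bar>elasticity f x\<bar>"
  define \<delta> where "\<delta> = 1 / (4 * K * v)"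
  have "2 \<le> K" "1 \<le> v"
    using M_nonneg by (simp_all add: K_def v_def)
  then have "2 * 1 \<le> 4 * K * v"
    by (intro mult_mono) auto
  then have "\<delta> \<le> 1 / 2"
    unfolding \<delta>_def by (intro divide_left_mono) auto
  then have "0 < y" and close: "\<bar>y - x\<bar> \<le> 2 * \<delta> * min x y"
    using reldist_less_imp_abs_diff_le[of y x \<delta>] x y by (auto simp: \<delta>_def K_def v_def)
  have "2 * K * \<delta> = 1 / (2 * v)"
    using \<open>2 \<le> K\<close> \<open>1 \<le> v\<close> by (simp add: \<delta>_def field_simps)
  also have "\<dots> \<le> elasticity_weight f x / 2"
    using elasticity_weight_bounds(2)[of f x] \<open>1 \<le> v\<close> by (simp add: v_def field_simps)
  finally have small: "2 * K * \<delta> \<le> elasticity_weight f x / 2" .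
  have "0 < min x y"
    using x \<open>0 < y\<close> by simp
  then have "(M + 2) / min x y * \<bar>y - x\<bar> \<le> (M + 2) / min x y * (2 * \<delta> * min x y)"
    using close M_nonneg by (intro mult_left_mono) auto
  also have "\<dots> = 2 * K * \<delta>"
    using x \<open>0 < y\<close> by (simp add: K_def min_def)
  finally have gap: "(M + 2) / min x y * \<bar>y - x\<bar> \<le> elasticity_weight f x / 2"
    using small by linarith
  show ?thesis
  proof (cases "x \<le> y")
    case True
    with gap have "(M + 2) / x * (y - x) \<le> elasticity_weight f x / 2"
      by simp
    moreover from this have "y < b"
      using less_right_end[OF kappa_b x True] by blast
    ultimately show ?thesis
      using nonzero_propagates_up[OF x True] \<open>0 < y\<close> by auto
  next
    case False
    with gap have "(M + 2) / y * (x - y) \<le> elasticity_weight f x / 2"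
      by simp
    then show ?thesis
      using nonzero_propagates_down[OF x \<open>0 < y\<close>] False x \<open>0 < y\<close> by auto
  qed
qed

theorem amenable:
  assumes "(kappa f \<longlongrightarrow> \<infinity>) (at_left b)"
  shows "amenable_on f {0<..<b}"
  unfolding amenable_on_def Let_def
proof (intro exI[of _ "4 * (M + 2)"] conjI ballI impI subsetI)
  show "0 < 4 * (M + 2)"
    using M_nonneg by simp
  fix x assume x: "x \<in> {0<..<b}" and "kappa f x < \<infinity>"
  then have "f x \<noteq> 0"
    by (auto simp: kappa_def)
  then have mu_x: "mu f x = ereal (1 + \<bar>elasticity f x\<bar>)"
    using x by (simp add: mu_eq_elasticity)
  have mu_x_real: "real_of_ereal (mu f x) = 1 + \<bar>elasticity f x\<bar>"
    by (simp add: mu_x)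
  let ?ball = "{y. reldist y x < ereal (1 / (4 * (M + 2) * real_of_ereal (mu f x)))}"
  have ball: "y \<in> {0<..<b} \<and> f y \<noteq> 0 \<and> elasticity_weight f x / 2 \<le> elasticity_weight f y"
    if "y \<in> ?ball" for y
  proof -
    have "reldist y x < ereal (1 / (4 * (M + 2) * (1 + \<bar>elasticity f x\<bar>)))"
      using that unfolding mu_x_real by simp
    then show ?thesis
      by (rule reldist_ball_nonzero[OF assms x \<open>f x \<noteq> 0\<close>])
  qed
  then show "y \<in> {0<..<b}" if "y \<in> ?ball" for y
    using that by blast
  fix y assume "y \<in> ?ball"
  then have y: "y \<in> {0<..<b}" "f y \<noteq> 0" "elasticity_weight f x / 2 \<le> elasticity_weight f y"
    using ball by auto
  have "1 + \<bar>elasticity f y\<bar> \<le> 4 * (1 + \<bar>elasticity f x\<bar>)"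
    using y(3) by (rule elasticity_le_of_elasticity_weight_half)
  also have "\<dots> \<le> 4 * (M + 2) * (1 + \<bar>elasticity f x\<bar>)"
    using M_nonneg by (intro mult_right_mono) auto
  finally have "1 + \<bar>elasticity f y\<bar> \<le> 4 * (M + 2) * (1 + \<bar>elasticity f x\<bar>)" .
  moreover have "mu f y = ereal (1 + \<bar>elasticity f y\<bar>)"
    using y by (simp add: mu_eq_elasticity)
  ultimately show "mu f y \<le> ereal (4 * (M + 2)) * mu f x"
    by (simp add: mu_x)
qed

end

theorem proposition3:
  fixes f :: "real \<Rightarrow> real" and b :: real
  assumes "b > 0"
    and "real_analytic_on f {0<..<b}"
    and "\<exists>x\<in>{0<..<b}. f x \<noteq> 0"
    and "(kappa f \<longlongrightarrow> \<infinity>) (at_left b)"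
    and "\<And>xs :: nat \<Rightarrow> real. (\<forall>j. xs j \<in> {0<..<b}) \<Longrightarrow> xs \<longlonglongrightarrow> 0 \<Longrightarrow>
           (\<lambda>j. reldist_set (xs j) {x\<in>{0<..<b}. f x = 0}) \<longlonglongrightarrow> 0 \<Longrightarrow>
           (\<lambda>j. kappa f (xs j)) \<longlonglongrightarrow> \<infinity>"
    and "\<exists>C>0. Limsup (at_right 0) (\<lambda>x. ereal \<bar>Hfun f x\<bar>) \<le> ereal C
              \<and> Limsup (at_left b) (\<lambda>x. ereal \<bar>Hfun f x\<bar>) \<le> ereal C"
  shows "amenable_on f {0<..<b}"
proof -
  note analytic = assms(2)
  obtain C where "Limsup (at_right 0) (\<lambda>x. ereal \<bar>Hfun f x\<bar>) \<le> ereal C"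
    and "Limsup (at_left b) (\<lambda>x. ereal \<bar>Hfun f x\<bar>) \<le> ereal C"
    using assms(6) by blast
  then have "bounded (Hfun f ` {0<..<b})"
    using real_analytic_on_Hfun_locally_bounded[OF analytic]
    by (intro bounded_on_Ioo_if_locally_bounded) (auto intro: le_less_trans)
  then obtain M where "M > 0" and "\<And>y. y \<in> {0<..<b} \<Longrightarrow> \<bar>Hfun f y\<bar> \<le> M"
    unfolding bounded_pos by auto
  then interpret bounded_Hfun f b M
    using real_analytic_on_DERIV[OF analytic] by unfold_locales auto
  show ?thesis
    using amenable[OF assms(4)] .
qed

end
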